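(* Let $X$ be a complex Banach space. For every $1\leq p\leq\infty$, $d^{\widehat{\mathcal{B}}}_p$ is a Bloch reasonable crossnorm on $\mathrm{lin}(\Gamma(\mathbb{D}))\otimes X$.
   Context: $\mathbb{D}=\{z\in\mathbb{C}:|z|<1\}$. $\widehat{\mathcal{B}}(\mathbb{D},Y)$ (for a complex Banach space $Y$) is the Banach space of holomorphic $f:\mathbb{D}\to Y$ with $f(0)=0$ and $p_{\mathcal{B}}(f)=\sup_{z\in\mathbb{D}}(1-|z|^2)\|f'(z)\|<\infty$, normed by $p_{\mathcal{B}}$; $\widehat{\mathcal{B}}(\mathbb{D})=\widehat{\mathcal{B}}(\mathbb{D},\mathbb{C})$ with closed unit ball $B_{\widehat{\mathcal{B}}(\mathbb{D})}$. For $z\in\mathbb{D}$, $\gamma_z\in\widehat{\mathcal{B}}(\mathbb{D})^*$ is $\gamma_z(g)=g'(z)$ (it has norm $1/(1-|z|^2)$). For $x\in X$, $\gamma_z\otimes x$ is the functional on $\widehat{\mathcal{B}}(\mathbb{D},X^* )$ given by $(\gamma_z\otimes x)(f)=\langle f'(z),x\rangle$, and $\mathrm{lin}(\Gamma(\mathbb{D}))\otimes X$ is the linear span of all $\gamma_z\otimes x$ in $\widehat{\mathcal{B}}(\mathbb{D},X^* )^*$, with elements written $\sum_{i=1}^n\lambda_i\gamma_{z_i}\otimes x_i$. Let $p^*$ be the conjugate index ($1^*=\infty$, $\infty^*=1$, $p^*=p/(p-1)$ otherwise). For $\gamma$ in this space, with infima over all representations $\gamma=\sum_{i=1}^n\lambda_i\gamma_{z_i}\otimes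 x_i$: $d^{\widehat{\mathcal{B}}}_1(\gamma)=\inf\left(\sup_{g\in B_{\widehat{\mathcal{B}}(\mathbb{D})}}\max_{i}|\lambda_i||g'(z_i)|\right)\left(\sum_i\|x_i\|\right)$; for $1<p<\infty$, $d^{\widehat{\mathcal{B}}}_p(\gamma)=\inf\left(\sup_{g\in B_{\widehat{\mathcal{B}}(\mathbb{D})}}\left(\sum_i|\lambda_i|^{p^*}|g'(z_i)|^{p^*}\right)^{1/p^*}\right)\left(\sum_i\|x_i\|^p\right)^{1/p}$; $d^{\widehat{\mathcal{B}}}_\infty(\gamma)=\inf\left(\sup_{g\in B_{\widehat{\mathcal{B}}(\mathbb{D})}}\sum_i|\lambda_i||g'(z_i)|\right)\left(\max_i\|x_i\|\right)$. A norm $\alpha$ on $\mathrm{lin}(\Gamma(\mathbb{D}))\otimes X$ is a Bloch reasonable crossnorm if (1) $\alpha(\gamma_z\otimes x)\leq\|\gamma_z\|\|x\|$ for all $z\in\mathbb{D}$, $x\in X$, and (2) for every $g\in\widehat{\mathcal{B}}(\mathbb{D})$ and $x^*\in X^*$, the linear functional $g\otimes x^*$ on $\mathrm{lin}(\Gamma(\mathbb{D}))\otimes X$ determined by $(g\otimes x^* )(\gamma_z\otimes x)=g'(z)x^*(x)$ is bounded (with respect to $\alpha$) with norm at most $p_{\mathcal{B}}(g)\|x^*\|$. *)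

theory Defs
  imports "HOL-Analysis.Analysis"
begin

class complex_banach = banach +
  fixes scaleC :: "complex \<Rightarrow> 'a \<Rightarrow> 'a"
  assumes scaleC_add_right: "scaleC c (x + y) = scaleC c x + scaleC c y"
      and scaleC_add_left: "scaleC (b + c) x = scaleC b x + scaleC c x"
      and scaleC_scaleC: "scaleC b (scaleC c x) = scaleC (b * c) x"
      and scaleC_one: "scaleC 1 x = x"
      and scaleC_of_real: "scaleC (complex_of_real r) x = r *\<^sub>R x"
      and norm_scaleC: "norm (scaleC c x) = cmod c * norm x"

definition cdual :: "('a::complex_banach \<Rightarrow> complex) set" where
  "cdual = {\<phi>. (\<forall>x y. \<phi> (x + y) = \<phi> x + \<phi> y) \<and>
               (\<forall>c x. \<phi> (scaleC c x) = c * \<phi> x) \<and>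
               (\<exists>K. \<forall>x. cmod (\<phi> x) \<le> K * norm x)}"

definition dnorm :: "('a::complex_banach \<Rightarrow> complex) \<Rightarrow> real" where
  "dnorm \<phi> = Sup {cmod (\<phi> x) | x. norm x \<le> 1}"

abbreviation disc :: "complex set" where "disc \<equiv> ball 0 1"

definition has_dual_deriv ::
  "(complex \<Rightarrow> 'a::complex_banach \<Rightarrow> complex) \<Rightarrow> ('a \<Rightarrow> complex) \<Rightarrow> complex \<Rightarrow> bool" where
  "has_dual_deriv F F' z \<longleftrightarrow> F' \<in> cdual \<and>
     ((\<lambda>w. dnorm (\<lambda>x. (F w x - F z x) / (w - z) - F' x)) \<longlongrightarrow> 0) (at z)"

definition dual_deriv :: "(complex \<Rightarrow> 'a::complex_banach \<Rightarrow> complex) \<Rightarrow> complex \<Rightarrow> 'a \<Rightarrow> complex" where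
  "dual_deriv F z = (SOME F'. has_dual_deriv F F' z)"

definition bloch_dual :: "(complex \<Rightarrow> 'a::complex_banach \<Rightarrow> complex) set" where
  "bloch_dual = {F. (\<forall>z\<in>disc. F z \<in> cdual) \<and> (\<forall>z\<in>disc. \<exists>F'. has_dual_deriv F F' z) \<and>
       F 0 = (\<lambda>x. 0) \<and>
       bdd_above ((\<lambda>z. (1 - (cmod z)\<^sup>2) * dnorm (dual_deriv F z)) ` disc)}"

definition bloch_norm :: "(complex \<Rightarrow> complex) \<Rightarrow> real" where
  "bloch_norm g = (SUP z\<in>disc. (1 - (cmod z)\<^sup>2) * cmod (deriv g z))"

definition bloch :: "(complex \<Rightarrow> complex) set" where
  "bloch = {g. g holomorphic_on disc \<and> g 0 = 0 \<and>
               bdd_above ((\<lambda>z. (1 - (cmod z)\<^sup>2) * cmod (deriv g z)) ` disc)}"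

definition bloch_ball :: "(complex \<Rightarrow> complex) set" where
  "bloch_ball = {g \<in> bloch. bloch_norm g \<le> 1}"

text \<open>Norm of the evaluation functional gamma_z (g |-> g'(z)) in the dual of the Bloch space.\<close>

definition gamma_norm :: "complex \<Rightarrow> real" where
  "gamma_norm z = (SUP g\<in>bloch_ball. cmod (deriv g z))"

text \<open>A representation sum_i lambda_i gamma_{z_i} (x) x_i is a list of triples (lambda_i, z_i, x_i)
with all z_i in D. Its associated functional on the vector-valued Bloch space
(taken to be 0 outside that space) is f |-> sum_i lambda_i <f'(z_i), x_i>.\<close>

definition valid_rep :: "(complex \<times> complex \<times> 'a) list \<Rightarrow> bool" where
  "valid_rep r \<longleftrightarrow> (\<forall>(l, z, x) \<in> set r. z \<in> disc)"

definition tens :: "(complex \<times> complex \<times> 'a::complex_banach) list \<Rightarrow>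
                    (complex \<Rightarrow> 'a \<Rightarrow> complex) \<Rightarrow> complex" where
  "tens r = (\<lambda>F. if F \<in> bloch_dual
                 then (\<Sum>(l, z, x)\<leftarrow>r. l * dual_deriv F z x) else 0)"

definition tensor_space :: "((complex \<Rightarrow> 'a::complex_banach \<Rightarrow> complex) \<Rightarrow> complex) set" where
  "tensor_space = {tens r | r. valid_rep r}"

definition lp_norm :: "ereal \<Rightarrow> real list \<Rightarrow> real" where
  "lp_norm p xs = (if p = \<infinity> then Max (insert 0 (set (map abs xs)))
                   else (\<Sum>t\<leftarrow>xs. \<bar>t\<bar> powr real_of_ereal p) powr (1 / real_of_ereal p))"

definition conj_idx :: "ereal \<Rightarrow> ereal" where
  "conj_idx p = (if p = 1 then \<infinity> else if p = \<infinity> then 1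
                 else ereal (real_of_ereal p / (real_of_ereal p - 1)))"

definition d_bloch :: "ereal \<Rightarrow> ((complex \<Rightarrow> 'a::complex_banach \<Rightarrow> complex) \<Rightarrow> complex) \<Rightarrow> real" where
  "d_bloch p \<gamma> = Inf {(SUP g\<in>bloch_ball.
                          lp_norm (conj_idx p) (map (\<lambda>(l, z, x). cmod l * cmod (deriv g z)) r))
                       * lp_norm p (map (\<lambda>(l, z, x). norm x) r)
                     | r. valid_rep r \<and> tens r = \<gamma>}"

definition is_norm_on :: "((complex \<Rightarrow> 'a::complex_banach \<Rightarrow> complex) \<Rightarrow> complex) set \<Rightarrow>
                          (((complex \<Rightarrow> 'a \<Rightarrow> complex) \<Rightarrow> complex) \<Rightarrow> real) \<Rightarrow> bool" where
  "is_norm_on V \<alpha> \<longleftrightarrow>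
     (\<forall>\<gamma>\<in>V. 0 \<le> \<alpha> \<gamma>) \<and>
     (\<forall>\<gamma>\<in>V. \<alpha> \<gamma> = 0 \<longleftrightarrow> \<gamma> = (\<lambda>F. 0)) \<and>
     (\<forall>\<gamma>\<in>V. \<forall>c. \<alpha> (\<lambda>F. c * \<gamma> F) = cmod c * \<alpha> \<gamma>) \<and>
     (\<forall>\<gamma>\<in>V. \<forall>\<delta>\<in>V. \<alpha> (\<lambda>F. \<gamma> F + \<delta> F) \<le> \<alpha> \<gamma> + \<alpha> \<delta>)"

text \<open>(1): alpha(gamma_z (x) x) <= ||gamma_z|| ||x||;
(2): for g in the Bloch space and x* in X*, the functional g (x) x*, given on
sum_i lambda_i gamma_{z_i} (x) x_i by sum_i lambda_i g'(z_i) x*(x_i), is bounded by p_B(g) ||x*||.\<close>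

definition bloch_reasonable_crossnorm ::
  "(((complex \<Rightarrow> 'a::complex_banach \<Rightarrow> complex) \<Rightarrow> complex) \<Rightarrow> real) \<Rightarrow> bool" where
  "bloch_reasonable_crossnorm \<alpha> \<longleftrightarrow>
     is_norm_on tensor_space \<alpha> \<and>
     (\<forall>z\<in>disc. \<forall>x. \<alpha> (tens [(1, z, x)]) \<le> gamma_norm z * norm x) \<and>
     (\<forall>g\<in>bloch. \<forall>xs\<in>cdual. \<forall>r. valid_rep r \<longrightarrow>
        cmod (\<Sum>(l, z, x)\<leftarrow>r. l * deriv g z * xs x) \<le> bloch_norm g * dnorm xs * \<alpha> (tens r))"

end

theory Submission
  imports Defs
begin

text \<open>
  Multiplying the coefficients by \<open>c\<close> gives homogeneity. For the triangle
  inequality, each representation is rebalanced (a factor \<open>t > 0\<close> is moved from the vectors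
  to the coefficients) until its two factors are at most \<open>D powr (1/p*)\<close> and \<open>D powr (1/p)\<close>;
  concatenating two such representations then adds the values \<open>D\<close>.

  By Hoelder's inequality, \<open>\<Sum>\<^sub>i \<lambda>\<^sub>i g'(z\<^sub>i) x\<^sup>*(x\<^sub>i)\<close> is bounded by \<open>p\<^sub>B(g) \<parallel>x\<^sup>*\<parallel>\<close>
  times the product for every representation; as this sum is the value of \<open>\<gamma>\<close> at the map
  \<open>w \<mapsto> g(w) x\<^sup>*\<close>, it does not depend on the representation, which gives property (2).
  Definiteness follows from (2): if \<open>d_bloch p \<gamma> = 0\<close>, testing with \<open>x\<^sup>* = F'(w)\<close> and a
  polynomial \<open>g\<close> whose derivative is \<open>1\<close> at \<open>w\<close> and \<open>0\<close> at the other points \<open>z\<^sub>i\<close>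
  shows that the part of \<open>\<gamma> F\<close> located at \<open>w\<close> vanishes.
\<close>

section \<open>\<open>l\<^sup>p\<close> norms of finite sequences\<close>

lemma ereal_ge1_cases:
  assumes "1 \<le> (p::ereal)"
  obtains "p = \<infinity>" | P where "p = ereal P" "1 \<le> P"
  using assms by (cases p) auto

lemma lp_norm_ereal: "lp_norm (ereal P) xs = (\<Sum>t\<leftarrow>xs. \<bar>t\<bar> powr P) powr (1 / P)"
  by (simp add: lp_norm_def)

lemma lp_norm_infinity: "lp_norm \<infinity> xs = Max (insert 0 (abs ` set xs))"
  by (simp add: lp_norm_def)

lemma lp_norm_nonneg: "0 \<le> lp_norm q xs"
  by (auto simp: lp_norm_def Max_ge_iff)

lemma lp_norm_Nil: "lp_norm q [] = 0"
  by (simp add: lp_norm_def)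

lemma lp_norm_singleton: "1 \<le> q \<Longrightarrow> lp_norm q [t] = \<bar>t\<bar>"
  by (cases rule: ereal_ge1_cases) (auto simp: lp_norm_def powr_powr)

lemma lp_norm_one:
  assumes "\<forall>i\<in>set r. 0 \<le> f i"
  shows "lp_norm 1 (map f r) = (\<Sum>i\<leftarrow>r. f i)"
proof -
  have "0 \<le> (\<Sum>i\<leftarrow>r. f i)"
    using assms by (intro sum_list_nonneg) auto
  then show ?thesis
    using assms by (simp add: lp_norm_def one_ereal_def cong: map_cong)
qed

lemma lp_norm_mono:
  assumes "1 \<le> q" "\<And>i. i \<in> set r \<Longrightarrow> 0 \<le> f i" "\<And>i. i \<in> set r \<Longrightarrow> f i \<le> g i"
  shows "lp_norm q (map f r) \<le> lp_norm q (map g r)"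
proof -
  have le: "\<bar>f i\<bar> \<le> \<bar>g i\<bar>" if "i \<in> set r" for i
    using assms(2,3)[OF that] by simp
  show ?thesis
    using assms(1)
  proof (cases rule: ereal_ge1_cases)
    case 1
    have "Max (insert 0 (abs ` f ` set r)) \<le> Max (insert 0 (abs ` g ` set r))"
      using le by (subst Max_le_iff) (auto simp: Max_ge_iff intro: bexI)
    then show ?thesis using 1 by (simp add: lp_norm_infinity)
  next
    case (2 P)
    have "(\<Sum>i\<leftarrow>r. \<bar>f i\<bar> powr P) \<le> (\<Sum>i\<leftarrow>r. \<bar>g i\<bar> powr P)"
      using le 2 by (intro sum_list_mono powr_mono2) auto
    moreover have "0 \<le> (\<Sum>i\<leftarrow>r. \<bar>f i\<bar> powr P)"
      by (rule sum_list_nonneg) auto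
    ultimately show ?thesis
      using 2 by (simp add: lp_norm_ereal o_def powr_mono2)
  qed
qed

lemma lp_norm_scale:
  assumes "1 \<le> q" "0 \<le> t"
  shows "lp_norm q (map (\<lambda>i. t * f i) r) = t * lp_norm q (map f r)"
  using assms(1)
proof (cases rule: ereal_ge1_cases)
  case 1
  have "Max ((*) t ` insert 0 (abs ` set (map f r))) = t * Max (insert 0 (abs ` set (map f r)))"
    by (rule mono_Max_commute[symmetric]) (auto simp: mono_def assms(2) mult_left_mono)
  then show ?thesis
    using 1 assms(2) by (simp add: lp_norm_infinity image_image abs_mult)
next
  case (2 P)
  have "(\<Sum>i\<leftarrow>r. \<bar>t * f i\<bar> powr P) = t powr P * (\<Sum>i\<leftarrow>r. \<bar>f i\<bar> powr P)"
    using assms(2) by (simp add: abs_mult powr_mult sum_list_const_mult)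
  then show ?thesis
    using 2 assms(2) by (simp add: lp_norm_ereal o_def powr_mult powr_powr sum_list_nonneg)
qed

lemma lp_norm_append:
  assumes "1 \<le> q"
  shows "lp_norm q (xs @ ys) = lp_norm q [lp_norm q xs, lp_norm q ys]"
  using assms
proof (cases rule: ereal_ge1_cases)
  case 1
  have "Max (insert 0 (abs ` set (xs @ ys))) =
        max (Max (insert 0 (abs ` set xs))) (Max (insert 0 (abs ` set ys)))"
    by (subst Max_Un[symmetric]) (auto simp: image_Un insert_absorb)
  then show ?thesis
    using 1 by (simp add: lp_norm_infinity Max_ge_iff max_def)
next
  case (2 P)
  have "0 \<le> (\<Sum>t\<leftarrow>xs. \<bar>t\<bar> powr P)" "0 \<le> (\<Sum>t\<leftarrow>ys. \<bar>t\<bar> powr P)"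
    by (rule sum_list_nonneg; auto)+
  with 2 show ?thesis by (simp add: lp_norm_ereal powr_powr)
qed

lemma lp_norm_pair_mono:
  assumes "1 \<le> q" "0 \<le> a" "a \<le> a'" "0 \<le> b" "b \<le> b'"
  shows "lp_norm q [a, b] \<le> lp_norm q [a', b']"
proof -
  have "lp_norm q (map fst [(a, a'), (b, b')]) \<le> lp_norm q (map snd [(a, a'), (b, b')])"
    by (rule lp_norm_mono[OF assms(1)]) (use assms in auto)
  then show ?thesis by simp
qed

text \<open>For \<open>q = \<infinity>\<close> the exponent \<open>1 / real_of_ereal q\<close> is \<open>1 / 0 = 0\<close>.\<close>

lemma lp_norm_pair_powr:
  assumes "1 \<le> q" "0 < a" "0 < b"
  shows "lp_norm q [a powr (1 / real_of_ereal q), b powr (1 / real_of_ereal q)] =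
         (a + b) powr (1 / real_of_ereal q)"
  using assms by (cases rule: ereal_ge1_cases) (auto simp: lp_norm_def powr_powr)

lemma lp_norm_pair_le_powr:
  assumes "1 \<le> q" "0 < D1" "0 < D2"
    and "0 \<le> a" "a \<le> D1 powr (1 / real_of_ereal q)" "0 \<le> b" "b \<le> D2 powr (1 / real_of_ereal q)"
  shows "lp_norm q [a, b] \<le> (D1 + D2) powr (1 / real_of_ereal q)"
  using lp_norm_pair_mono[OF assms(1,4-7)] lp_norm_pair_powr[OF assms(1-3)] by simp

lemma conj_idx_ge1: "1 \<le> p \<Longrightarrow> 1 \<le> conj_idx p"
  by (cases rule: ereal_ge1_cases) (auto simp: conj_idx_def)

lemma inverse_conj_idx_add:
  "1 \<le> p \<Longrightarrow> 1 / real_of_ereal p + 1 / real_of_ereal (conj_idx p) = 1"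
  by (cases rule: ereal_ge1_cases) (auto simp: conj_idx_def field_simps one_ereal_def)

lemma norm_sum_list_le: "norm (\<Sum>i\<leftarrow>r. f i) \<le> (\<Sum>i\<leftarrow>r. norm (f i :: 'a::real_normed_vector))"
  by (induction r) (auto intro: order_trans[OF norm_triangle_ineq])

lemma sum_list_powr_eq_0_iff:
  fixes f :: "'a \<Rightarrow> real"
  assumes "0 < P" "\<forall>i\<in>set r. 0 \<le> f i"
  shows "(\<Sum>i\<leftarrow>r. f i powr P) = 0 \<longleftrightarrow> (\<forall>i\<in>set r. f i = 0)"
  by (subst sum_list_nonneg_eq_0_iff) (use assms in auto)

lemma Holder_sum_list_real:
  fixes P Q :: real
  assumes PQ: "1 < P" "1 < Q" "1 / P + 1 / Q = 1"
    and nonneg: "\<forall>i\<in>set r. 0 \<le> f i" "\<forall>i\<in>set r. 0 \<le> g i"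
  shows "(\<Sum>i\<leftarrow>r. f i * g i) \<le> lp_norm (ereal Q) (map f r) * lp_norm (ereal P) (map g r)"
proof -
  define a where "a = lp_norm (ereal Q) (map f r)"
  define b where "b = lp_norm (ereal P) (map g r)"
  have "0 \<le> (\<Sum>i\<leftarrow>r. f i powr Q)" "0 \<le> (\<Sum>i\<leftarrow>r. g i powr P)"
    by (rule sum_list_nonneg; auto)+
  then have Sf: "(\<Sum>i\<leftarrow>r. f i powr Q) = a powr Q" and Sg: "(\<Sum>i\<leftarrow>r. g i powr P) = b powr P"
    using nonneg PQ by (simp_all add: a_def b_def lp_norm_ereal o_def powr_powr cong: map_cong)
  show ?thesis
  proof (cases "a = 0 \<or> b = 0")
    case True
    then have "\<forall>i\<in>set r. f i * g i = 0"
      using Sf Sg sum_list_powr_eq_0_iff[of Q r f] sum_list_powr_eq_0_iff[of P r g] nonneg PQ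
      by auto
    then have "(\<Sum>i\<leftarrow>r. f i * g i) = 0"
      by (induction r) auto
    then show ?thesis
      by (simp add: lp_norm_nonneg)
  next
    case False
    then have ab: "0 < a" "0 < b"
      using lp_norm_nonneg by (auto simp: a_def b_def order_le_less)
    have "(\<Sum>i\<leftarrow>r. f i * g i) * (1 / (a * b)) = (\<Sum>i\<leftarrow>r. (f i / a) * (g i / b))"
      unfolding sum_list_mult_const[symmetric] by simp
    also have "\<dots> \<le> (\<Sum>i\<leftarrow>r. (f i / a) powr Q / Q + (g i / b) powr P / P)"
    proof (rule sum_list_mono)
      fix i assume "i \<in> set r"
      then show "(f i / a) * (g i / b) \<le> (f i / a) powr Q / Q + (g i / b) powr P / P"
        using Youngs_inequality[of Q P "f i / a" "g i / b"] PQ nonneg ab by (simp add: add.commute)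
    qed
    also have "\<dots> = (\<Sum>i\<leftarrow>r. f i powr Q * (1 / (Q * a powr Q)) + g i powr P * (1 / (P * b powr P)))"
      using nonneg ab by (intro arg_cong[where f = sum_list] map_cong) (simp_all add: powr_divide mult.commute)
    also have "\<dots> = 1"
      unfolding sum_list_addf sum_list_mult_const Sf Sg using ab PQ by (simp add: add.commute)
    finally have "(\<Sum>i\<leftarrow>r. f i * g i) * (1 / (a * b)) \<le> 1" .
    then show ?thesis
      using ab by (simp add: a_def b_def)
  qed
qed

lemma Holder_sum_list:
  assumes "1 \<le> p" "\<forall>i\<in>set r. 0 \<le> f i" "\<forall>i\<in>set r. 0 \<le> g i"
  shows "(\<Sum>i\<leftarrow>r. f i * g i) \<le> lp_norm (conj_idx p) (map f r) * lp_norm p (map g r)"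
  using assms(1)
proof (cases rule: ereal_ge1_cases)
  case 1
  have "(\<Sum>i\<leftarrow>r. f i * g i) \<le> (\<Sum>i\<leftarrow>r. f i * lp_norm \<infinity> (map g r))"
    using assms by (intro sum_list_mono mult_left_mono) (auto simp: lp_norm_infinity Max_ge_iff)
  then show ?thesis
    using 1 assms by (simp add: conj_idx_def lp_norm_one sum_list_mult_const)
next
  case (2 P)
  show ?thesis
  proof (cases "P = 1")
    case True
    have "(\<Sum>i\<leftarrow>r. f i * g i) \<le> (\<Sum>i\<leftarrow>r. lp_norm \<infinity> (map f r) * g i)"
      using assms by (intro sum_list_mono mult_right_mono) (auto simp: lp_norm_infinity Max_ge_iff)
    then show ?thesis
      using 2 True assms by (simp add: conj_idx_def lp_norm_one sum_list_const_mult flip: one_ereal_def)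
  next
    case False
    then have "1 < P" "conj_idx p = ereal (P / (P - 1))"
      using 2 by (auto simp: conj_idx_def one_ereal_def)
    then show ?thesis
      using Holder_sum_list_real[of P "P / (P - 1)" r f g] assms 2 by (simp add: field_simps)
  qed
qed

section \<open>The dual space and dual derivatives\<close>

lemma cdual_add: "\<phi> \<in> cdual \<Longrightarrow> \<phi> (x + y) = \<phi> x + \<phi> y"
  by (simp add: cdual_def)

lemma cdual_scaleC: "\<phi> \<in> cdual \<Longrightarrow> \<phi> (scaleC c x) = c * \<phi> x"
  by (simp add: cdual_def)

lemma cdual_zero: "\<phi> \<in> cdual \<Longrightarrow> \<phi> 0 = 0"
  using cdual_add[of \<phi> 0 0] by simp

lemma cdual_lincomb:
  assumes "\<phi> \<in> cdual" "\<psi> \<in> cdual"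
  shows "(\<lambda>x. a * \<phi> x + b * \<psi> x) \<in> cdual"
proof -
  obtain K1 K2 where K: "\<And>x. cmod (\<phi> x) \<le> K1 * norm x" "\<And>x. cmod (\<psi> x) \<le> K2 * norm x"
    using assms by (auto simp: cdual_def)
  have "cmod (a * \<phi> x + b * \<psi> x) \<le> (cmod a * K1 + cmod b * K2) * norm x" for x
  proof -
    have "cmod (a * \<phi> x + b * \<psi> x) \<le> cmod a * cmod (\<phi> x) + cmod b * cmod (\<psi> x)"
      by (metis norm_mult norm_triangle_ineq)
    also have "\<dots> \<le> cmod a * (K1 * norm x) + cmod b * (K2 * norm x)"
      by (intro add_mono mult_left_mono K) auto
    finally show ?thesis by (simp add: algebra_simps)
  qed
  moreover have "a * \<phi> (x + y) + b * \<psi> (x + y) = (a * \<phi> x + b * \<psi> x) + (a * \<phi> y + b * \<psi> y)"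
    for x y using assms by (simp add: cdual_add algebra_simps)
  moreover have "a * \<phi> (scaleC c x) + b * \<psi> (scaleC c x) = c * (a * \<phi> x + b * \<psi> x)"
    for c x using assms by (simp add: cdual_scaleC algebra_simps)
  ultimately show ?thesis
    unfolding cdual_def by blast
qed

lemma cdual_scale: "\<phi> \<in> cdual \<Longrightarrow> (\<lambda>x. a * \<phi> x) \<in> cdual"
  using cdual_lincomb[of \<phi> \<phi> a 0] by simp

lemma dnorm_ge:
  assumes "\<phi> \<in> cdual" "norm x \<le> 1"
  shows "cmod (\<phi> x) \<le> dnorm \<phi>"
proof -
  obtain K where K: "\<And>x. cmod (\<phi> x) \<le> K * norm x"
    using assms(1) by (auto simp: cdual_def)
  have "K * norm y \<le> max K 0" if "norm y \<le> 1" for y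
    using that by (cases "0 \<le> K") (auto simp: mult_left_le mult_nonpos_nonneg)
  then have "cmod (\<phi> y) \<le> max K 0" if "norm y \<le> 1" for y
    using K[of y] that by fastforce
  then have "bdd_above {cmod (\<phi> y) | y. norm y \<le> 1}"
    by (auto simp: bdd_above_def)
  then show ?thesis
    unfolding dnorm_def using assms(2) by (auto intro: cSup_upper)
qed

lemma dnorm_nonneg: "\<phi> \<in> cdual \<Longrightarrow> 0 \<le> dnorm \<phi>"
  using dnorm_ge[of \<phi> 0] cdual_zero[of \<phi>] by simp

lemma dnorm_le: "(\<And>x. norm x \<le> 1 \<Longrightarrow> cmod (\<phi> x) \<le> M) \<Longrightarrow> dnorm \<phi> \<le> M"
  unfolding dnorm_def by (rule cSup_least) (auto intro: exI[of _ 0])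

lemma cdual_norm_bound:
  assumes "\<phi> \<in> cdual"
  shows "cmod (\<phi> x) \<le> dnorm \<phi> * norm x"
proof (cases "x = 0")
  case True
  then show ?thesis using assms by (simp add: cdual_zero)
next
  case False
  have "cmod (\<phi> x) / norm x = cmod (\<phi> (scaleC (complex_of_real (1 / norm x)) x))"
    using assms by (simp add: cdual_scaleC norm_mult norm_divide)
  also have "\<dots> \<le> dnorm \<phi>"
    using False by (intro dnorm_ge assms) (simp add: norm_scaleC norm_divide)
  finally show ?thesis
    using False by (simp add: divide_le_eq)
qed

lemma dnorm_scale_le: "\<phi> \<in> cdual \<Longrightarrow> dnorm (\<lambda>x. a * \<phi> x) \<le> cmod a * dnorm \<phi>"
  by (rule dnorm_le) (simp add: norm_mult mult_left_mono dnorm_ge)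

text \<open>Off \<open>cdual\<close>, \<open>dnorm\<close> is a junk supremum, hence the hypothesis that every \<open>F w\<close>
  lies in \<open>cdual\<close>.\<close>

lemma has_dual_deriv_pointwise:
  assumes "\<And>w. F w \<in> cdual" and "has_dual_deriv F F' z"
  shows "((\<lambda>w. (F w x - F z x) / (w - z)) \<longlongrightarrow> F' x) (at z)"
proof -
  define D where "D w = (\<lambda>x. (F w x - F z x) / (w - z) - F' x)" for w
  have F': "F' \<in> cdual" and lim: "((\<lambda>w. dnorm (D w)) \<longlongrightarrow> 0) (at z)"
    using assms(2) by (simp_all add: has_dual_deriv_def D_def)
  have "D w \<in> cdual" for w
  proof -
    have "D w = (\<lambda>x. inverse (w - z) * F w x + 1 * (- inverse (w - z) * F z x + (- 1) * F' x))"
      by (simp add: D_def fun_eq_iff divide_inverse algebra_simps)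
    also have "\<dots> \<in> cdual"
      by (intro cdual_lincomb assms(1) F')
    finally show ?thesis .
  qed
  then have "((\<lambda>w. D w x) \<longlongrightarrow> 0) (at z)"
    by (intro Lim_null_comparison[OF always_eventually tendsto_mult_left_zero[OF lim, of "norm x"]])
      (simp add: cdual_norm_bound)
  then show ?thesis
    by (simp add: D_def LIM_zero_iff)
qed

lemma dual_deriv_eqI:
  assumes "\<And>w. F w \<in> cdual" and "has_dual_deriv F F' z"
  shows "dual_deriv F z = F'"
proof
  fix x
  have "has_dual_deriv F (dual_deriv F z) z"
    unfolding dual_deriv_def by (rule someI[where P = "\<lambda>F'. has_dual_deriv F F' z", OF assms(2)])
  then show "dual_deriv F z x = F' x"
    by (rule tendsto_unique[OF at_neq_bot has_dual_deriv_pointwise[OF assms(1)]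
          has_dual_deriv_pointwise[OF assms]])
qed

lemma has_dual_deriv_dual_deriv:
  assumes "F \<in> bloch_dual" "z \<in> disc"
  shows "has_dual_deriv F (dual_deriv F z) z"
proof -
  obtain F' where "has_dual_deriv F F' z"
    using assms unfolding bloch_dual_def by blast
  then show ?thesis
    unfolding dual_deriv_def by (rule someI[where P = "\<lambda>F'. has_dual_deriv F F' z"])
qed

lemma dual_deriv_in_cdual: "F \<in> bloch_dual \<Longrightarrow> z \<in> disc \<Longrightarrow> dual_deriv F z \<in> cdual"
  using has_dual_deriv_dual_deriv by (auto simp: has_dual_deriv_def)

section \<open>Scalar Bloch functions and the maps \<open>w \<mapsto> g(w) x\<^sup>*\<close>\<close>

lemma one_minus_norm_sq_pos: "z \<in> disc \<Longrightarrow> 0 < 1 - (cmod z)\<^sup>2"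
  by (simp add: abs_square_less_1)

lemma bloch_norm_ge:
  assumes "g \<in> bloch" "z \<in> disc"
  shows "(1 - (cmod z)\<^sup>2) * cmod (deriv g z) \<le> bloch_norm g"
  unfolding bloch_norm_def using assms by (auto simp: bloch_def intro: cSUP_upper)

lemma bloch_norm_nonneg: "g \<in> bloch \<Longrightarrow> 0 \<le> bloch_norm g"
  using bloch_norm_ge[of g 0] by simp (meson norm_ge_zero order_trans)

lemma bloch_ball_deriv_le:
  assumes "g \<in> bloch_ball" "z \<in> disc"
  shows "cmod (deriv g z) \<le> 1 / (1 - (cmod z)\<^sup>2)"
  using bloch_norm_ge[of g z] assms one_minus_norm_sq_pos[OF assms(2)]
  by (simp add: bloch_ball_def field_simps)

lemma zero_in_bloch_ball: "(\<lambda>z. 0) \<in> bloch_ball"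
  by (simp add: bloch_ball_def bloch_def bloch_norm_def bdd_above_def) (meson order_refl)

lemma bloch_has_field_derivative:
  "g \<in> bloch \<Longrightarrow> z \<in> disc \<Longrightarrow> (g has_field_derivative deriv g z) (at z)"
  by (rule holomorphic_derivI[of g disc]) (auto simp: bloch_def)

lemma bloch_divide_norm_in_bloch_ball:
  assumes g: "g \<in> bloch" and pos: "0 < bloch_norm g"
  shows "(\<lambda>w. g w / bloch_norm g) \<in> bloch_ball"
    and "z \<in> disc \<Longrightarrow> deriv (\<lambda>w. g w / bloch_norm g) z = deriv g z / bloch_norm g"
proof -
  define b where "b = bloch_norm g"
  have "0 < b"
    using pos by (simp add: b_def)
  show deriv: "deriv (\<lambda>w. g w / b) z = deriv g z / b" if "z \<in> disc" for z
    by (rule DERIV_imp_deriv[OF DERIV_cdivide[OF bloch_has_field_derivative[OF g that]]])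
  have le: "(1 - (cmod z)\<^sup>2) * cmod (deriv (\<lambda>w. g w / b) z) \<le> 1" if "z \<in> disc" for z
    using bloch_norm_ge[OF g that] \<open>0 < b\<close> unfolding deriv[OF that] b_def[symmetric]
    by (simp add: norm_divide field_simps)
  have "(\<lambda>w. g w / b) holomorphic_on disc" "g 0 / b = 0"
    using g by (auto simp: bloch_def intro!: holomorphic_intros)
  moreover have "bdd_above ((\<lambda>z. (1 - (cmod z)\<^sup>2) * cmod (deriv (\<lambda>w. g w / b) z)) ` disc)"
    using le by (intro bdd_aboveI2) auto
  moreover have "bloch_norm (\<lambda>w. g w / b) \<le> 1"
    unfolding bloch_norm_def[of "\<lambda>w. g w / b"] using le by (intro cSUP_least) auto
  ultimately show "(\<lambda>w. g w / b) \<in> bloch_ball"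
    by (simp add: bloch_ball_def bloch_def)
qed

lemma has_dual_deriv_scalar_times:
  assumes "(g has_field_derivative g') (at z)" "\<phi> \<in> cdual"
  shows "has_dual_deriv (\<lambda>w x. g w * \<phi> x) (\<lambda>x. g' * \<phi> x) z"
proof -
  define c where "c w = (g w - g z) / (w - z) - g'" for w
  have quotient: "(\<lambda>x. (g w * \<phi> x - g z * \<phi> x) / (w - z) - g' * \<phi> x) = (\<lambda>x. c w * \<phi> x)" for w
    by (simp add: c_def fun_eq_iff left_diff_distrib times_divide_eq_left)
  have "(c \<longlongrightarrow> 0) (at z)"
    using assms(1) unfolding c_def has_field_derivative_iff by (rule LIM_zero)
  then have lim: "((\<lambda>w. cmod (c w) * dnorm \<phi>) \<longlongrightarrow> 0) (at z)"
    by (intro tendsto_mult_left_zero tendsto_norm_zero)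
  have bound: "\<forall>w. norm (dnorm (\<lambda>x. c w * \<phi> x)) \<le> cmod (c w) * dnorm \<phi>"
    using dnorm_scale_le[OF assms(2)] dnorm_nonneg[OF cdual_scale[OF assms(2)]] by simp
  have "((\<lambda>w. dnorm (\<lambda>x. c w * \<phi> x)) \<longlongrightarrow> 0) (at z)"
    by (rule Lim_null_comparison[OF always_eventually[OF bound] lim])
  then show ?thesis
    unfolding has_dual_deriv_def quotient using cdual_scale[OF assms(2)] by blast
qed

lemma scalar_times_in_bloch_dual:
  assumes g: "g \<in> bloch" and \<phi>: "\<phi> \<in> cdual"
  shows "(\<lambda>w x. g w * \<phi> x) \<in> bloch_dual"
    and "z \<in> disc \<Longrightarrow> dual_deriv (\<lambda>w x. g w * \<phi> x) z = (\<lambda>x. deriv g z * \<phi> x)"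
proof -
  have has: "has_dual_deriv (\<lambda>w x. g w * \<phi> x) (\<lambda>x. deriv g z * \<phi> x) z" if "z \<in> disc" for z
    by (rule has_dual_deriv_scalar_times[OF bloch_has_field_derivative[OF g that] \<phi>])
  show dd: "dual_deriv (\<lambda>w x. g w * \<phi> x) z = (\<lambda>x. deriv g z * \<phi> x)" if "z \<in> disc" for z
    by (rule dual_deriv_eqI[OF cdual_scale[OF \<phi>] has[OF that]])
  have "(1 - (cmod z)\<^sup>2) * dnorm (dual_deriv (\<lambda>w x. g w * \<phi> x) z) \<le> bloch_norm g * dnorm \<phi>"
    if z: "z \<in> disc" for z
  proof -
    have "(1 - (cmod z)\<^sup>2) * dnorm (\<lambda>x. deriv g z * \<phi> x) \<le> (1 - (cmod z)\<^sup>2) * (cmod (deriv g z) * dnorm \<phi>)"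
      using one_minus_norm_sq_pos[OF z] dnorm_scale_le[OF \<phi>] by (intro mult_left_mono) auto
    also have "\<dots> \<le> bloch_norm g * dnorm \<phi>"
      using bloch_norm_ge[OF g z] dnorm_nonneg[OF \<phi>] by (simp add: mult.assoc[symmetric] mult_right_mono)
    finally show ?thesis by (simp add: dd[OF z])
  qed
  then have "bdd_above ((\<lambda>z. (1 - (cmod z)\<^sup>2) * dnorm (dual_deriv (\<lambda>w x. g w * \<phi> x) z)) ` disc)"
    by (intro bdd_aboveI2) auto
  moreover have "\<forall>z\<in>disc. \<exists>F'. has_dual_deriv (\<lambda>w x. g w * \<phi> x) F' z"
    using has by blast
  ultimately show "(\<lambda>w x. g w * \<phi> x) \<in> bloch_dual"
    using g cdual_scale[OF \<phi>] by (simp add: bloch_dual_def bloch_def)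
qed

lemma tens_scalar_times:
  assumes "g \<in> bloch" "\<phi> \<in> cdual" "valid_rep r"
  shows "tens r (\<lambda>w x. g w * \<phi> x) = (\<Sum>(l, z, x)\<leftarrow>r. l * deriv g z * \<phi> x)"
proof -
  have "(\<Sum>(l, z, x)\<leftarrow>r. l * dual_deriv (\<lambda>w x. g w * \<phi> x) z x) = (\<Sum>(l, z, x)\<leftarrow>r. l * deriv g z * \<phi> x)"
  proof (intro arg_cong[where f = sum_list] map_cong refl)
    fix y assume "y \<in> set r"
    then show "(case y of (l, z, x) \<Rightarrow> l * dual_deriv (\<lambda>w x. g w * \<phi> x) z x) =
               (case y of (l, z, x) \<Rightarrow> l * deriv g z * \<phi> x)"
      using assms(3) scalar_times_in_bloch_dual(2)[OF assms(1,2)] by (cases y) (auto simp: valid_rep_def)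
  qed
  then show ?thesis
    using scalar_times_in_bloch_dual(1)[OF assms(1,2)] by (simp add: tens_def)
qed

section \<open>The two factors of \<open>d_bloch\<close>\<close>

definition gamma_moduli :: "(complex \<Rightarrow> complex) \<Rightarrow> (complex \<times> complex \<times> 'a) list \<Rightarrow> real list" where
  "gamma_moduli g r = map (\<lambda>(l, z, x). cmod l * cmod (deriv g z)) r"

definition weak_norm :: "ereal \<Rightarrow> (complex \<times> complex \<times> 'a) list \<Rightarrow> real" where
  "weak_norm p r = (SUP g\<in>bloch_ball. lp_norm (conj_idx p) (gamma_moduli g r))"

definition strong_norm :: "ereal \<Rightarrow> (complex \<times> complex \<times> 'a::real_normed_vector) list \<Rightarrow> real" where
  "strong_norm p r = lp_norm p (map (\<lambda>(l, z, x). norm x) r)"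

lemma d_bloch_eq_Inf:
  "d_bloch p \<gamma> = Inf {weak_norm p r * strong_norm p r | r. valid_rep r \<and> tens r = \<gamma>}"
  by (simp add: d_bloch_def weak_norm_def strong_norm_def gamma_moduli_def)

lemma weak_norm_ge:
  assumes "1 \<le> p" "valid_rep r" "g \<in> bloch_ball"
  shows "lp_norm (conj_idx p) (gamma_moduli g r) \<le> weak_norm p r"
proof -
  have "lp_norm (conj_idx p) (gamma_moduli h r) \<le>
        lp_norm (conj_idx p) (map (\<lambda>(l, z, x). cmod l * (1 / (1 - (cmod z)\<^sup>2))) r)"
    if h: "h \<in> bloch_ball" for h
    unfolding gamma_moduli_def
  proof (rule lp_norm_mono[OF conj_idx_ge1[OF assms(1)]])
    fix i assume "i \<in> set r"
    moreover obtain l z x where "i = (l, z, x)"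
      by (cases i)
    ultimately have "z \<in> disc" "i = (l, z, x)"
      using assms(2) by (auto simp: valid_rep_def)
    then show "(case i of (l, z, x) \<Rightarrow> cmod l * cmod (deriv h z))
             \<le> (case i of (l, z, x) \<Rightarrow> cmod l * (1 / (1 - (cmod z)\<^sup>2)))"
      using mult_left_mono[OF bloch_ball_deriv_le[OF h \<open>z \<in> disc\<close>], of "cmod l"] by simp
  qed auto
  then show ?thesis
    unfolding weak_norm_def by (intro cSUP_upper[OF assms(3)] bdd_aboveI2) auto
qed

lemma weak_norm_le:
  "(\<And>g. g \<in> bloch_ball \<Longrightarrow> lp_norm (conj_idx p) (gamma_moduli g r) \<le> M) \<Longrightarrow> weak_norm p r \<le> M"
  unfolding weak_norm_def using zero_in_bloch_ball by (intro cSUP_least) auto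

lemma weak_norm_nonneg: "1 \<le> p \<Longrightarrow> valid_rep r \<Longrightarrow> 0 \<le> weak_norm p r"
  by (meson order_trans lp_norm_nonneg weak_norm_ge zero_in_bloch_ball)

lemma strong_norm_nonneg: "0 \<le> strong_norm p r"
  by (simp add: strong_norm_def lp_norm_nonneg)

lemma d_bloch_le:
  assumes "1 \<le> p" "valid_rep r"
  shows "d_bloch p (tens r) \<le> weak_norm p r * strong_norm p r"
  unfolding d_bloch_eq_Inf using assms weak_norm_nonneg strong_norm_nonneg
  by (intro cInf_lower) (auto intro!: bdd_belowI[of _ 0] mult_nonneg_nonneg)

lemma d_bloch_single_le:
  assumes p: "1 \<le> p" and z: "z \<in> disc"
  shows "d_bloch p (tens [(1, z, x)]) \<le> gamma_norm z * norm x"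
proof -
  have "weak_norm p [(1, z, x)] = gamma_norm z"
    unfolding weak_norm_def gamma_norm_def gamma_moduli_def
    using lp_norm_singleton[OF conj_idx_ge1[OF p]] by simp
  moreover have "strong_norm p [(1, z, x)] = norm x"
    unfolding strong_norm_def using lp_norm_singleton[OF p] by simp
  ultimately show ?thesis
    using d_bloch_le[OF p, of "[(1, z, x)]"] z by (simp add: valid_rep_def)
qed

lemma le_d_bloch:
  assumes "valid_rep r0" "tens r0 = \<gamma>"
    and "\<And>r. valid_rep r \<Longrightarrow> tens r = \<gamma> \<Longrightarrow> c \<le> weak_norm p r * strong_norm p r"
  shows "c \<le> d_bloch p \<gamma>"
  unfolding d_bloch_eq_Inf using assms by (intro cInf_greatest) auto

lemma d_bloch_nonneg: "1 \<le> p \<Longrightarrow> valid_rep r \<Longrightarrow> 0 \<le> d_bloch p (tens r)"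
  by (rule le_d_bloch[OF _ refl]) (auto intro: mult_nonneg_nonneg weak_norm_nonneg strong_norm_nonneg)

lemma le_mult_d_bloch:
  assumes "valid_rep r0" "tens r0 = \<gamma>" "0 \<le> c"
    and "\<And>r. valid_rep r \<Longrightarrow> tens r = \<gamma> \<Longrightarrow> a \<le> c * (weak_norm p r * strong_norm p r)"
  shows "a \<le> c * d_bloch p \<gamma>"
proof (cases "c = 0")
  case True
  then show ?thesis using assms by fastforce
next
  case False
  then have "a / c \<le> d_bloch p \<gamma>"
    using assms by (intro le_d_bloch[OF assms(1,2)]) (simp add: divide_le_eq mult.commute)
  then show ?thesis
    using False assms(3) by (simp add: divide_le_eq mult.commute)
qed

lemma d_bloch_approx:
  assumes "valid_rep r0" "tens r0 = \<gamma>" "d_bloch p \<gamma> < D"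
  obtains r where "valid_rep r" "tens r = \<gamma>" "weak_norm p r * strong_norm p r < D"
  using cInf_lessD[of "{weak_norm p r * strong_norm p r | r. valid_rep r \<and> tens r = \<gamma>}" D] assms
  unfolding d_bloch_eq_Inf by blast

lemma lp_norm_gamma_moduli_le:
  assumes p: "1 \<le> p" and r: "valid_rep r" and g: "g \<in> bloch"
  shows "lp_norm (conj_idx p) (gamma_moduli g r) \<le> bloch_norm g * weak_norm p r"
proof (cases "bloch_norm g = 0")
  case True
  have "deriv g z = 0" if "z \<in> disc" for z
    using bloch_norm_ge[OF g that] one_minus_norm_sq_pos[OF that] True
    by (simp add: mult_le_0_iff)
  then have "gamma_moduli g r = map (\<lambda>i. 0 * 0) r"
    using r by (auto simp: gamma_moduli_def valid_rep_def)
  then show ?thesis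
    using lp_norm_scale[OF conj_idx_ge1[OF p] order_refl, of "\<lambda>i. 0" r] True by simp
next
  case False
  define h where "h = (\<lambda>w. g w / bloch_norm g)"
  have h: "h \<in> bloch_ball" "\<And>z. z \<in> disc \<Longrightarrow> deriv h z = deriv g z / bloch_norm g"
    using bloch_divide_norm_in_bloch_ball[OF g] False bloch_norm_nonneg[OF g]
    unfolding h_def by auto
  have "cmod (deriv g z) = bloch_norm g * cmod (deriv h z)" if "z \<in> disc" for z
    using h(2)[OF that] False bloch_norm_nonneg[OF g] by (simp add: norm_divide)
  then have "gamma_moduli g r = map (\<lambda>t. bloch_norm g * t) (gamma_moduli h r)"
    using r by (fastforce simp: gamma_moduli_def valid_rep_def)
  then have "lp_norm (conj_idx p) (gamma_moduli g r) = bloch_norm g * lp_norm (conj_idx p) (gamma_moduli h r)"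
    using lp_norm_scale[OF conj_idx_ge1[OF p] bloch_norm_nonneg[OF g], of id] by simp
  also have "\<dots> \<le> bloch_norm g * weak_norm p r"
    using weak_norm_ge[OF p r h(1)] bloch_norm_nonneg[OF g] by (rule mult_left_mono)
  finally show ?thesis .
qed

lemma crossnorm_sum_le_rep:
  assumes p: "1 \<le> p" and g: "g \<in> bloch" and \<phi>: "\<phi> \<in> cdual" and r: "valid_rep r"
  shows "cmod (\<Sum>(l, z, x)\<leftarrow>r. l * deriv g z * \<phi> x)
         \<le> bloch_norm g * dnorm \<phi> * (weak_norm p r * strong_norm p r)"
proof -
  define a where "a = (\<lambda>(l, z, x::'a). cmod l * cmod (deriv g z))"
  define b where "b = (\<lambda>(l::complex, z::complex, x::'a). norm x)"
  have nonneg: "\<forall>i\<in>set r. 0 \<le> a i" "\<forall>i\<in>set r. 0 \<le> b i"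
    by (auto simp: a_def b_def)
  have "cmod (\<Sum>(l, z, x)\<leftarrow>r. l * deriv g z * \<phi> x) \<le> (\<Sum>i\<leftarrow>r. dnorm \<phi> * (a i * b i))"
  proof (rule order_trans[OF norm_sum_list_le sum_list_mono])
    fix i assume "i \<in> set r"
    obtain l z x where "i = (l, z, x)"
      by (cases i)
    then show "cmod (case i of (l, z, x) \<Rightarrow> l * deriv g z * \<phi> x) \<le> dnorm \<phi> * (a i * b i)"
      using mult_left_mono[OF cdual_norm_bound[OF \<phi>, of x], of "cmod l * cmod (deriv g z)"]
      by (simp add: a_def b_def norm_mult ac_simps)
  qed
  also have "\<dots> \<le> dnorm \<phi> * (lp_norm (conj_idx p) (map a r) * lp_norm p (map b r))"
    unfolding sum_list_const_mult
    using Holder_sum_list[OF p nonneg] dnorm_nonneg[OF \<phi>] by (rule mult_left_mono)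
  also have "\<dots> = dnorm \<phi> * (lp_norm (conj_idx p) (gamma_moduli g r) * strong_norm p r)"
    by (simp add: a_def b_def gamma_moduli_def strong_norm_def)
  also have "\<dots> \<le> dnorm \<phi> * (bloch_norm g * weak_norm p r * strong_norm p r)"
    using lp_norm_gamma_moduli_le[OF p r g] dnorm_nonneg[OF \<phi>] strong_norm_nonneg[of p r]
    by (intro mult_left_mono mult_right_mono)
  finally show ?thesis
    by (simp only: ac_simps)
qed

lemma crossnorm_sum_le_d_bloch:
  assumes p: "1 \<le> p" and g: "g \<in> bloch" and \<phi>: "\<phi> \<in> cdual" and r: "valid_rep r"
  shows "cmod (\<Sum>(l, z, x)\<leftarrow>r. l * deriv g z * \<phi> x) \<le> bloch_norm g * dnorm \<phi> * d_bloch p (tens r)"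
proof (rule le_mult_d_bloch[OF r refl])
  show "0 \<le> bloch_norm g * dnorm \<phi>"
    using bloch_norm_nonneg[OF g] dnorm_nonneg[OF \<phi>] by simp
  fix r' assume r': "valid_rep r'" "tens r' = tens r"
  have "(\<Sum>(l, z, x)\<leftarrow>r. l * deriv g z * \<phi> x) = (\<Sum>(l, z, x)\<leftarrow>r'. l * deriv g z * \<phi> x)"
    using tens_scalar_times[OF g \<phi> r] tens_scalar_times[OF g \<phi> r'(1)] r'(2) by simp
  then show "cmod (\<Sum>(l, z, x)\<leftarrow>r. l * deriv g z * \<phi> x)
             \<le> bloch_norm g * dnorm \<phi> * (weak_norm p r' * strong_norm p r')"
    using crossnorm_sum_le_rep[OF p g \<phi> r'(1)] by simp
qed

section \<open>Definiteness\<close>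

lemma poly_minus_poly_0_in_bloch:
  fixes q :: "complex poly"
  shows "(\<lambda>z. poly q z - poly q 0) \<in> bloch"
    and "deriv (\<lambda>z. poly q z - poly q 0) z = poly (pderiv q) z"
proof -
  have has_deriv: "((\<lambda>z. poly q z - poly q 0) has_field_derivative poly (pderiv q) z) (at z)" for z
    using DERIV_diff[OF poly_DERIV DERIV_const] by simp
  show deriv: "deriv (\<lambda>z. poly q z - poly q 0) z = poly (pderiv q) z" for z
    by (rule DERIV_imp_deriv[OF has_deriv])
  have "bounded (poly (pderiv q) ` cball 0 1)"
    by (intro compact_imp_bounded compact_continuous_image continuous_on_poly continuous_on_id
        compact_cball)
  then obtain B where B: "\<And>z. z \<in> cball 0 1 \<Longrightarrow> cmod (poly (pderiv q) z) \<le> B"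
    unfolding bounded_iff by (meson image_eqI)
  have bound: "(1 - (cmod z)\<^sup>2) * cmod (deriv (\<lambda>z. poly q z - poly q 0) z) \<le> B"
    if "z \<in> disc" for z
  proof -
    have "(1 - (cmod z)\<^sup>2) * cmod (poly (pderiv q) z) \<le> cmod (poly (pderiv q) z)"
      using one_minus_norm_sq_pos[OF that] by (intro mult_left_le_one_le) auto
    then show ?thesis
      using B[of z] that by (simp add: deriv)
  qed
  have "(\<lambda>z. poly q z - poly q 0) holomorphic_on disc"
    using has_deriv unfolding holomorphic_on_def field_differentiable_def
    by (blast intro: has_field_derivative_at_within)
  moreover have "bdd_above ((\<lambda>z. (1 - (cmod z)\<^sup>2) * cmod (deriv (\<lambda>z. poly q z - poly q 0) z)) ` disc)"
    by (rule bdd_aboveI2) (rule bound)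
  ultimately show "(\<lambda>z. poly q z - poly q 0) \<in> bloch"
    unfolding bloch_def by simp
qed

lemma bloch_deriv_interpolation:
  fixes W :: "complex set"
  assumes "finite W" "w0 \<in> W"
  obtains g where "g \<in> bloch" "deriv g w0 = 1" "\<And>w. w \<in> W \<Longrightarrow> w \<noteq> w0 \<Longrightarrow> deriv g w = 0"
proof -
  define R where "R = (\<Prod>w\<in>W - {w0}. [:- w, 1:])"
  text \<open>\<open>q\<close> has a simple zero at \<open>w0\<close> and double zeros at the other points of \<open>W\<close>.\<close>
  define q where "q = smult (1 / poly R w0 ^ 2) ([:- w0, 1:] * R * R)"
  have "poly R w0 \<noteq> 0"
    using assms by (simp add: R_def poly_prod)
  then have "poly (pderiv q) w0 = 1"
    unfolding q_def pderiv_smult pderiv_mult by (simp add: pderiv_pCons power2_eq_square)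
  moreover have "poly (pderiv q) w = 0" if "w \<in> W" "w \<noteq> w0" for w
  proof -
    have "poly R w = 0"
      using assms that by (auto simp: R_def poly_prod)
    then show ?thesis
      unfolding q_def pderiv_smult pderiv_mult by simp
  qed
  ultimately show thesis
    using that poly_minus_poly_0_in_bloch[of q] by auto
qed

lemma sum_list_sum_commute:
  "(\<Sum>i\<leftarrow>r. \<Sum>w\<in>W. f w i) = (\<Sum>w\<in>W. \<Sum>i\<leftarrow>r. f w i)"
  by (induction r) (simp_all add: sum.distrib)

lemma point_sum_eq_0_if_d_bloch_eq_0:
  assumes p: "1 \<le> p" and r: "valid_rep r" and d0: "d_bloch p (tens r) = 0"
    and \<phi>: "\<phi> \<in> cdual" and w: "w \<in> (\<lambda>(l, z, x). z) ` set r"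
  shows "(\<Sum>(l, z, x)\<leftarrow>r. if z = w then l * \<phi> x else 0) = 0"
proof -
  obtain g where g: "g \<in> bloch" "deriv g w = 1"
    "\<And>v. v \<in> (\<lambda>(l, z, x). z) ` set r \<Longrightarrow> v \<noteq> w \<Longrightarrow> deriv g v = 0"
    using bloch_deriv_interpolation[OF finite_imageI[OF finite_set] w] by blast
  have "cmod (\<Sum>(l, z, x)\<leftarrow>r. l * deriv g z * \<phi> x) \<le> 0"
    using crossnorm_sum_le_d_bloch[OF p g(1) \<phi> r] d0 by simp
  moreover have "(\<Sum>(l, z, x)\<leftarrow>r. l * deriv g z * \<phi> x) = (\<Sum>(l, z, x)\<leftarrow>r. if z = w then l * \<phi> x else 0)"
    using g by (intro arg_cong[where f = sum_list] map_cong) force+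
  ultimately show ?thesis
    by simp
qed

lemma d_bloch_eq_0_imp_zero:
  fixes r :: "(complex \<times> complex \<times> 'a::complex_banach) list"
  assumes p: "1 \<le> p" and r: "valid_rep r" and d0: "d_bloch p (tens r) = 0"
  shows "tens r = (\<lambda>F. 0)"
proof
  fix F :: "complex \<Rightarrow> 'a \<Rightarrow> complex"
  show "tens r F = 0"
  proof (cases "F \<in> bloch_dual")
    case False
    then show ?thesis by (simp add: tens_def)
  next
    case True
    define W where "W = (\<lambda>(l, z, x). z) ` set r"
    have W: "finite W" "\<And>l z x. (l, z, x) \<in> set r \<Longrightarrow> z \<in> W" "W \<subseteq> disc"
      using r by (force simp: W_def valid_rep_def)+
    have "tens r F = (\<Sum>(l, z, x)\<leftarrow>r. \<Sum>w\<in>W. if z = w then l * dual_deriv F w x else 0)"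
      unfolding tens_def using True W by (auto intro!: arg_cong[where f = sum_list] map_cong)
    also have "\<dots> = (\<Sum>w\<in>W. \<Sum>(l, z, x)\<leftarrow>r. if z = w then l * dual_deriv F w x else 0)"
      by (subst sum_list_sum_commute[symmetric]) (simp add: split_def)
    also have "\<dots> = 0"
    proof (intro sum.neutral ballI)
      fix w assume "w \<in> W"
      then have "dual_deriv F w \<in> cdual"
        using W(3) by (auto intro: dual_deriv_in_cdual[OF True])
      then show "(\<Sum>(l, z, x)\<leftarrow>r. if z = w then l * dual_deriv F w x else 0) = 0"
        using \<open>w \<in> W\<close> by (rule point_sum_eq_0_if_d_bloch_eq_0[OF p r d0, unfolded W_def[symmetric]])
    qed
    finally show ?thesis .
  qed
qed

lemma d_bloch_eq_0_iff:
  fixes r :: "(complex \<times> complex \<times> 'a::complex_banach) list"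
  assumes p: "1 \<le> p" and r: "valid_rep r"
  shows "d_bloch p (tens r) = 0 \<longleftrightarrow> tens r = (\<lambda>F. 0)"
proof
  assume "tens r = (\<lambda>F. 0)"
  then have "tens r = tens ([] :: (complex \<times> complex \<times> 'a) list)"
    by (simp add: tens_def fun_eq_iff)
  moreover have "d_bloch p (tens ([] :: (complex \<times> complex \<times> 'a) list)) \<le> 0"
    using d_bloch_le[OF p, of "[]"] by (simp add: valid_rep_def strong_norm_def lp_norm_Nil)
  ultimately show "d_bloch p (tens r) = 0"
    using d_bloch_nonneg[OF p r] by simp
qed (rule d_bloch_eq_0_imp_zero[OF p r])

section \<open>Homogeneity and the triangle inequality\<close>

definition rep_scale :: "complex \<Rightarrow> (complex \<times> complex \<times> 'a) list \<Rightarrow> (complex \<times> complex \<times> 'a) list" where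
  "rep_scale c r = map (\<lambda>(l, z, x). (c * l, z, x)) r"

definition rep_rebalance ::
  "real \<Rightarrow> (complex \<times> complex \<times> 'a::complex_banach) list \<Rightarrow> (complex \<times> complex \<times> 'a) list" where
  "rep_rebalance t r = map (\<lambda>(l, z, x). (t * l, z, scaleC (1 / t) x)) r"

lemma valid_rep_append [simp]: "valid_rep (r @ s) \<longleftrightarrow> valid_rep r \<and> valid_rep s"
  unfolding valid_rep_def by (simp add: ball_Un)

lemma valid_rep_scale [simp]: "valid_rep (rep_scale c r) \<longleftrightarrow> valid_rep r"
  by (auto simp: valid_rep_def rep_scale_def)

lemma valid_rep_rebalance [simp]: "valid_rep (rep_rebalance t r) \<longleftrightarrow> valid_rep r"
  by (auto simp: valid_rep_def rep_rebalance_def)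

lemma tens_append: "tens (r @ s) = (\<lambda>F. tens r F + tens s F)"
  by (simp add: tens_def fun_eq_iff)

lemma tens_rep_scale: "tens (rep_scale c r) = (\<lambda>F. c * tens r F)"
  by (simp add: tens_def rep_scale_def fun_eq_iff o_def case_prod_beta mult.assoc
      flip: sum_list_const_mult)

lemma tens_rep_rebalance:
  assumes r: "valid_rep r" and t: "t \<noteq> 0"
  shows "tens (rep_rebalance t r) = tens r"
proof
  fix F :: "complex \<Rightarrow> 'a \<Rightarrow> complex"
  have "(\<Sum>(l, z, x)\<leftarrow>rep_rebalance t r. l * dual_deriv F z x) = (\<Sum>(l, z, x)\<leftarrow>r. l * dual_deriv F z x)"
    if F: "F \<in> bloch_dual"
    using r unfolding rep_rebalance_def
    by (induction r) (auto simp: valid_rep_def t cdual_scaleC dual_deriv_in_cdual[OF F])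
  then show "tens (rep_rebalance t r) F = tens r F"
    by (simp add: tens_def)
qed

lemma gamma_moduli_rep_scale: "gamma_moduli g (rep_scale c r) = map (\<lambda>t. cmod c * t) (gamma_moduli g r)"
  by (simp add: gamma_moduli_def rep_scale_def case_prod_beta norm_mult mult.assoc)

lemma weak_norm_rep_scale:
  assumes p: "1 \<le> p" and r: "valid_rep r"
  shows "weak_norm p (rep_scale c r) \<le> cmod c * weak_norm p r"
proof (rule weak_norm_le)
  fix g assume "g \<in> bloch_ball"
  then show "lp_norm (conj_idx p) (gamma_moduli g (rep_scale c r)) \<le> cmod c * weak_norm p r"
    using lp_norm_scale[OF conj_idx_ge1[OF p] norm_ge_zero, of c id "gamma_moduli g r"]
      weak_norm_ge[OF p r] by (simp add: gamma_moduli_rep_scale mult_left_mono)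
qed

lemma strong_norm_rep_scale: "strong_norm p (rep_scale c r) = strong_norm p r"
  by (simp add: strong_norm_def rep_scale_def split_def o_def)

lemma gamma_moduli_rep_rebalance:
  "0 < t \<Longrightarrow> gamma_moduli g (rep_rebalance t r) = map (\<lambda>s. t * s) (gamma_moduli g r)"
  by (simp add: gamma_moduli_def rep_rebalance_def case_prod_beta norm_mult mult.assoc)

lemma weak_norm_rep_rebalance:
  assumes p: "1 \<le> p" and r: "valid_rep r" and t: "0 < t"
  shows "weak_norm p (rep_rebalance t r) \<le> t * weak_norm p r"
proof (rule weak_norm_le)
  fix g assume "g \<in> bloch_ball"
  then show "lp_norm (conj_idx p) (gamma_moduli g (rep_rebalance t r)) \<le> t * weak_norm p r"
    using lp_norm_scale[OF conj_idx_ge1[OF p], of t id "gamma_moduli g r"] t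
      weak_norm_ge[OF p r] by (simp add: gamma_moduli_rep_rebalance mult_left_mono)
qed

lemma strong_norm_rep_rebalance:
  assumes p: "1 \<le> p" and t: "0 < t"
  shows "strong_norm p (rep_rebalance t r) = strong_norm p r / t"
proof -
  have "map (\<lambda>(l, z, x). norm x) (rep_rebalance t r) = map (\<lambda>i. (1 / t) * (case i of (l, z, x) \<Rightarrow> norm x)) r"
    using t by (simp add: rep_rebalance_def split_def norm_scaleC norm_divide)
  then show ?thesis
    using lp_norm_scale[OF p, of "1 / t"] t by (simp add: strong_norm_def)
qed

lemma weak_norm_append:
  assumes p: "1 \<le> p" and r: "valid_rep r" and s: "valid_rep s"
  shows "weak_norm p (r @ s) \<le> lp_norm (conj_idx p) [weak_norm p r, weak_norm p s]"
proof (rule weak_norm_le)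
  fix g assume g: "g \<in> bloch_ball"
  have "lp_norm (conj_idx p) (gamma_moduli g (r @ s)) =
        lp_norm (conj_idx p) [lp_norm (conj_idx p) (gamma_moduli g r), lp_norm (conj_idx p) (gamma_moduli g s)]"
    using lp_norm_append[OF conj_idx_ge1[OF p]] by (simp add: gamma_moduli_def)
  also have "\<dots> \<le> lp_norm (conj_idx p) [weak_norm p r, weak_norm p s]"
    using weak_norm_ge[OF p r g] weak_norm_ge[OF p s g]
    by (intro lp_norm_pair_mono conj_idx_ge1[OF p] lp_norm_nonneg)
  finally show "lp_norm (conj_idx p) (gamma_moduli g (r @ s)) \<le> lp_norm (conj_idx p) [weak_norm p r, weak_norm p s]" .
qed

lemma strong_norm_append:
  "1 \<le> p \<Longrightarrow> strong_norm p (r @ s) = lp_norm p [strong_norm p r, strong_norm p s]"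
  using lp_norm_append by (simp add: strong_norm_def)

lemma d_bloch_scale_le:
  assumes p: "1 \<le> p" and r: "valid_rep r"
  shows "d_bloch p (\<lambda>F. c * tens r F) \<le> cmod c * d_bloch p (tens r)"
proof (rule le_mult_d_bloch[OF r refl norm_ge_zero])
  fix r' assume r': "valid_rep r'" "tens r' = tens r"
  then have "d_bloch p (\<lambda>F. c * tens r F) \<le> weak_norm p (rep_scale c r') * strong_norm p (rep_scale c r')"
    using d_bloch_le[OF p, of "rep_scale c r'"] by (simp add: tens_rep_scale)
  also have "\<dots> \<le> cmod c * (weak_norm p r' * strong_norm p r')"
    using mult_right_mono[OF weak_norm_rep_scale[OF p r'(1)] strong_norm_nonneg, of c p]
    by (simp add: strong_norm_rep_scale mult.assoc)
  finally show "d_bloch p (\<lambda>F. c * tens r F) \<le> cmod c * (weak_norm p r' * strong_norm p r')" .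
qed

lemma d_bloch_scale:
  assumes p: "1 \<le> p" and r: "valid_rep r"
  shows "d_bloch p (\<lambda>F. c * tens r F) = cmod c * d_bloch p (tens r)"
proof (cases "c = 0")
  case True
  then show ?thesis
    using d_bloch_scale_le[OF p r, of c] d_bloch_nonneg[OF p, of "rep_scale c r"] r
    by (simp add: tens_rep_scale)
next
  case False
  have "d_bloch p (tens r) = d_bloch p (\<lambda>F. (1 / c) * tens (rep_scale c r) F)"
    using False by (simp add: tens_rep_scale)
  also have "\<dots> \<le> cmod (1 / c) * d_bloch p (\<lambda>F. c * tens r F)"
    using d_bloch_scale_le[OF p, of "rep_scale c r" "1 / c"] r by (simp add: tens_rep_scale)
  finally have "cmod c * d_bloch p (tens r) \<le> d_bloch p (\<lambda>F. c * tens r F)"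
    using False by (simp add: norm_divide field_simps)
  with d_bloch_scale_le[OF p r, of c] show ?thesis
    by linarith
qed

lemma exists_balancing_factor:
  fixes a b D \<alpha> \<beta> :: real
  assumes "0 \<le> a" "0 \<le> b" "a * b < D" "\<alpha> + \<beta> = 1"
  obtains t where "0 < t" "t * a \<le> D powr \<alpha>" "b / t \<le> D powr \<beta>"
proof -
  have D: "0 < D"
    using assms by (meson mult_nonneg_nonneg order_le_less_trans)
  have "\<beta> = 1 - \<alpha>"
    using assms(4) by simp
  then have split: "D powr \<beta> = D / D powr \<alpha>"
    using D by (simp add: powr_diff)
  consider "0 < a" | "a = 0" "0 < b" | "a = 0" "b = 0"
    using assms(1,2) by linarith
  then show thesis
  proof cases
    case 1
    have "b / (D powr \<alpha> / a) = a * b / D powr \<alpha>"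
      using 1 by simp
    also have "\<dots> \<le> D powr \<beta>"
      unfolding split using assms(3) D by (intro divide_right_mono) auto
    finally show thesis
      using 1 D by (intro that[of "D powr \<alpha> / a"]) auto
  next
    case 2
    then show thesis
      using D by (intro that[of "b / D powr \<beta>"]) auto
  next
    case 3
    then show thesis
      using D by (intro that[of 1]) auto
  qed
qed

lemma exists_balanced_rep:
  assumes p: "1 \<le> p" and r: "valid_rep r" and D: "weak_norm p r * strong_norm p r < D"
  obtains r' where "valid_rep r'" "tens r' = tens r"
    "weak_norm p r' \<le> D powr (1 / real_of_ereal (conj_idx p))"
    "strong_norm p r' \<le> D powr (1 / real_of_ereal p)"
proof -
  obtain t where t: "0 < t" "t * weak_norm p r \<le> D powr (1 / real_of_ereal (conj_idx p))"
    "strong_norm p r / t \<le> D powr (1 / real_of_ereal p)"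
    using exists_balancing_factor[OF weak_norm_nonneg[OF p r] strong_norm_nonneg D]
      inverse_conj_idx_add[OF p] by (metis add.commute)
  show thesis
  proof (rule that[of "rep_rebalance t r"])
    show "valid_rep (rep_rebalance t r)" "tens (rep_rebalance t r) = tens r"
      using r t(1) by (simp_all add: tens_rep_rebalance)
    show "weak_norm p (rep_rebalance t r) \<le> D powr (1 / real_of_ereal (conj_idx p))"
      using weak_norm_rep_rebalance[OF p r t(1)] t(2) by linarith
    show "strong_norm p (rep_rebalance t r) \<le> D powr (1 / real_of_ereal p)"
      unfolding strong_norm_rep_rebalance[OF p t(1)] by (rule t(3))
  qed
qed

lemma d_bloch_append_le:
  assumes p: "1 \<le> p" and r: "valid_rep r" and s: "valid_rep s"
    and D1: "weak_norm p r * strong_norm p r < D1" and D2: "weak_norm p s * strong_norm p s < D2"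
  shows "d_bloch p (tens (r @ s)) \<le> D1 + D2"
proof -
  define \<alpha> where "\<alpha> = 1 / real_of_ereal (conj_idx p)"
  define \<beta> where "\<beta> = 1 / real_of_ereal p"
  have "0 \<le> weak_norm p r * strong_norm p r" "0 \<le> weak_norm p s * strong_norm p s"
    using p r s by (simp_all add: weak_norm_nonneg strong_norm_nonneg)
  then have pos: "0 < D1" "0 < D2"
    using D1 D2 by linarith+
  obtain r' where r': "valid_rep r'" "tens r' = tens r" "weak_norm p r' \<le> D1 powr \<alpha>" "strong_norm p r' \<le> D1 powr \<beta>"
    using exists_balanced_rep[OF p r D1] unfolding \<alpha>_def \<beta>_def by blast
  obtain s' where s': "valid_rep s'" "tens s' = tens s" "weak_norm p s' \<le> D2 powr \<alpha>" "strong_norm p s' \<le> D2 powr \<beta>"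
    using exists_balanced_rep[OF p s D2] unfolding \<alpha>_def \<beta>_def by blast
  have "weak_norm p (r' @ s') \<le> (D1 + D2) powr \<alpha>"
    using weak_norm_append[OF p r'(1) s'(1)] r'(3) s'(3) weak_norm_nonneg[OF p] r'(1) s'(1)
      lp_norm_pair_le_powr[OF conj_idx_ge1[OF p] pos] unfolding \<alpha>_def by (meson order_trans)
  moreover have "strong_norm p (r' @ s') \<le> (D1 + D2) powr \<beta>"
    unfolding strong_norm_append[OF p] \<beta>_def
    using r'(4) s'(4) by (intro lp_norm_pair_le_powr[OF p pos] strong_norm_nonneg) (simp_all add: \<beta>_def)
  ultimately have "weak_norm p (r' @ s') * strong_norm p (r' @ s') \<le> (D1 + D2) powr \<alpha> * (D1 + D2) powr \<beta>"
    using weak_norm_nonneg[OF p] r'(1) s'(1) strong_norm_nonneg by (intro mult_mono) auto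
  also have "\<dots> = D1 + D2"
    using pos inverse_conj_idx_add[OF p] by (simp add: \<alpha>_def \<beta>_def add.commute flip: powr_add)
  finally show ?thesis
    using d_bloch_le[OF p, of "r' @ s'"] r' s' by (simp add: tens_append)
qed

lemma d_bloch_triangle:
  assumes p: "1 \<le> p" and r: "valid_rep r" and s: "valid_rep s"
  shows "d_bloch p (\<lambda>F. tens r F + tens s F) \<le> d_bloch p (tens r) + d_bloch p (tens s)"
proof (rule field_le_epsilon)
  fix e :: real assume "0 < e"
  then obtain r' s' where r': "valid_rep r'" "tens r' = tens r"
      "weak_norm p r' * strong_norm p r' < d_bloch p (tens r) + e / 2"
    and s': "valid_rep s'" "tens s' = tens s"
      "weak_norm p s' * strong_norm p s' < d_bloch p (tens s) + e / 2"
    using d_bloch_approx[OF r refl] d_bloch_approx[OF s refl] by (metis half_gt_zero less_add_same_cancel1)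
  have "d_bloch p (\<lambda>F. tens r F + tens s F) = d_bloch p (tens (r' @ s'))"
    using r' s' by (simp add: tens_append)
  also have "\<dots> \<le> (d_bloch p (tens r) + e / 2) + (d_bloch p (tens s) + e / 2)"
    by (rule d_bloch_append_le[OF p r'(1) s'(1) r'(3) s'(3)])
  finally show "d_bloch p (\<lambda>F. tens r F + tens s F) \<le> d_bloch p (tens r) + d_bloch p (tens s) + e"
    by simp
qed

theorem theorem2p6:
  fixes p :: ereal
  assumes "1 \<le> p"
  shows "bloch_reasonable_crossnorm (d_bloch p :: ((complex \<Rightarrow> 'a::complex_banach \<Rightarrow> complex) \<Rightarrow> complex) \<Rightarrow> real)"
proof -
  have "is_norm_on tensor_space (d_bloch p :: ((complex \<Rightarrow> 'a \<Rightarrow> complex) \<Rightarrow> complex) \<Rightarrow> real)"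
    unfolding is_norm_on_def tensor_space_def
    using d_bloch_nonneg[OF assms] d_bloch_eq_0_iff[OF assms] d_bloch_scale[OF assms]
      d_bloch_triangle[OF assms]
    by auto
  then show ?thesis
    unfolding bloch_reasonable_crossnorm_def
    using d_bloch_single_le[OF assms] crossnorm_sum_le_d_bloch[OF assms] by blast
qed

end
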